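(* Let $r$, $s$, $c$, $d$ and $a_n$ be any integers with $r\neq0$, and assume $p^2-4q\neq0$ and that $V_d$, $V_{r+d}$, $U_r$ are nonzero. If $n$ is a positive even integer, then \[ \begin{split} &\sum_{a_{n-1}=c}^{a_n}\sum_{a_{n-2}=c}^{a_{n-1}}\cdots\sum_{a_0=c}^{a_1}\left(\frac{V_d}{V_{r+d}}\right)^{a_0}W_{ra_0+s} =\frac{1}{q^{dn}\Delta^n}\left(\frac{V_d}{U_r}\right)^n\left(\frac{V_d}{V_{r+d}}\right)^{a_n}W_{r(n+a_n)+dn+s}\\ &\quad-\left(\frac{V_d}{V_{r+d}}\right)^{c-1}\frac{1}{\Delta^n}\sum_{j=0}^{(n-2)/2}\frac{\Delta^{2j}}{q^{d(n-2j)}}\left(\frac{V_d}{U_r}\right)^{n-2j}W_{(r+d)(n-2j)+r(c-1)+s}\binom{a_n+2j-c}{2j}\\ &\quad-\left(\frac{V_d}{V_{r+d}}\right)^{c-1}\frac{1}{\Delta^{n+2}}\sum_{j=1}^{n/2}\frac{\Delta^{2j}}{q^{d(n-2j+1)}}\left(\frac{V_d}{U_r}\right)^{n-2j+1}\Big(W_{(r+d)(n-2j+1)+r(c-1)+s+1}-qW_{(r+d)(n-2j+1)+r(c-1)+s-1}\Big)\binom{a_n+2j-1-c}{2j-1}, \end{split} \] while if $n$ is a positive odd integer, then \[ \begin{split} &\sum_{a_{n-1}=c}^{a_n}\sum_{a_{n-2}=c}^{a_{n-1}}\cdots\sum_{a_0=c}^{a_1}\left(\frac{V_d}{V_{r+d}}\right)^{a_0}W_{ra_0+s}\\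 &=\frac{1}{q^{dn}\Delta^{n+1}}\left(\frac{V_d}{U_r}\right)^n\left(\frac{V_d}{V_{r+d}}\right)^{a_n}\Big(W_{r(n+a_n)+dn+s+1}-qW_{r(n+a_n)+dn+s-1}\Big)\\ &\quad-\left(\frac{V_d}{V_{r+d}}\right)^{c-1}\frac{1}{\Delta^{n+1}}\sum_{j=0}^{(n-1)/2}\frac{\Delta^{2j}}{q^{d(n-2j)}}\left(\frac{V_d}{U_r}\right)^{n-2j}\Big(W_{(r+d)(n-2j)+r(c-1)+s+1}-qW_{(r+d)(n-2j)+r(c-1)+s-1}\Big)\binom{a_n+2j-c}{2j}\\ &\quad-\left(\frac{V_d}{V_{r+d}}\right)^{c-1}\frac{1}{\Delta^{n+1}}\sum_{j=1}^{(n-1)/2}\frac{\Delta^{2j}}{q^{d(n-2j+1)}}\left(\frac{V_d}{U_r}\right)^{n-2j+1}W_{(r+d)(n-2j+1)+r(c-1)+s}\binom{a_n+2j-1-c}{2j-1}. \end{split} \]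
   Context: Let $a,b,p,q$ be complex numbers with $p\neq0$, $q\neq0$. The Horadam sequence $W_j=W_j(a,b;p,q)$ is defined by $W_0=a$, $W_1=b$, $W_j=pW_{j-1}-qW_{j-2}$ for $j\ge2$, and extended to negative indices by $W_{-m}=(pW_{-m+1}-W_{-m+2})/q$, so the recurrence holds for all integers. $U_j=W_j(0,1;p,q)$ and $V_j=W_j(2,p;p,q)$ are the Lucas sequences of the first and second kinds. $\Delta=\sqrt{p^2-4q}$ (only even powers of $\Delta$ occur, so the choice of square root is immaterial). For integers $c,m$ and a function $f$ on the integers, $\sum_{k=c}^m f(k)$ denotes the usual sum if $m\ge c$, equals $0$ if $m=c-1$, and equals $-\sum_{k=m+1}^{c-1}f(k)$ if $m\le c-2$. The nested sum $\sum_{a_{n-1}=c}^{a_n}\cdots\sum_{a_0=c}^{a_1}g(a_0)$ is the iterated sum with $n$ summation signs: innermost over $a_0$ from $c$ to $a_1$, then $a_1$ from $c$ to $a_2$, ..., outermost $a_{n-1}$ from $c$ to $a_n$. For an integer $j\ge0$ and any number $y$, $\binom{y}{j}=y(y-1)\cdots(y-j+1)/j!$. An empty sum (e.g. $\sum_{j=1}^{0}$) is $0$. *)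

theory Defs
  imports Complex_Main
begin

fun Wpos :: "complex \<Rightarrow> complex \<Rightarrow> complex \<Rightarrow> complex \<Rightarrow> nat \<Rightarrow> complex" where
  "Wpos a b p q 0 = a"
| "Wpos a b p q (Suc 0) = b"
| "Wpos a b p q (Suc (Suc n)) = p * Wpos a b p q (Suc n) - q * Wpos a b p q n"

fun Wneg :: "complex \<Rightarrow> complex \<Rightarrow> complex \<Rightarrow> complex \<Rightarrow> nat \<Rightarrow> complex" where
  "Wneg a b p q 0 = a"
| "Wneg a b p q (Suc 0) = (p * a - b) / q"
| "Wneg a b p q (Suc (Suc n)) = (p * Wneg a b p q (Suc n) - Wneg a b p q n) / q"

definition W :: "complex \<Rightarrow> complex \<Rightarrow> complex \<Rightarrow> complex \<Rightarrow> int \<Rightarrow> complex" where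
  "W a b p q j = (if 0 \<le> j then Wpos a b p q (nat j) else Wneg a b p q (nat (- j)))"

definition U :: "complex \<Rightarrow> complex \<Rightarrow> int \<Rightarrow> complex" where
  "U p q = W 0 1 p q"

definition V :: "complex \<Rightarrow> complex \<Rightarrow> int \<Rightarrow> complex" where
  "V p q = W 2 p p q"

definition Delta :: "complex \<Rightarrow> complex \<Rightarrow> complex" where
  "Delta p q = csqrt (p\<^sup>2 - 4 * q)"

definition gsum :: "int \<Rightarrow> int \<Rightarrow> (int \<Rightarrow> complex) \<Rightarrow> complex" where
  "gsum c m f = (if c \<le> m then (\<Sum>k\<in>{c..m}. f k) else - (\<Sum>k\<in>{m+1..c-1}. f k))"

text \<open>nested_sum c n g x = sum_{a_{n-1}=c}^{x} ... sum_{a_0=c}^{a_1} g a_0 (n summation signs).\<close>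
fun nested_sum :: "int \<Rightarrow> nat \<Rightarrow> (int \<Rightarrow> complex) \<Rightarrow> int \<Rightarrow> complex" where
  "nested_sum c 0 g x = g x"
| "nested_sum c (Suc n) g x = gsum c x (nested_sum c n g)"

end

theory Submission
  imports Defs
begin

(* By the Binet formula W_j = A \<alpha>^j + B \<beta>^j, where \<alpha>, \<beta> are the roots of X^2 - p X + q,
   the summand x^k W_(r k + s) with x = V_d / V_(r+d) is a combination of the two geometric
   sequences t^k with t = x \<alpha>^r and t = x \<beta>^r.  An n-fold nested sum of t^k from c to m equals
   \<tau>^n t^m - t^(c-1) \<Sum>_(i<n) \<tau>^(n-i) binom(m - c + i, i) with \<tau> = t / (t - 1), by induction on n
   and Pascal's rule.  For this particular x the two ratios \<tau> are K \<alpha>^(r+d) and -K \<beta>^(r+d),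
   where K = V_d / (q^d \<Delta> U_r), so the two geometric contributions recombine into W_j at even
   powers of K and into (W_(j+1) - q W_(j-1)) / \<Delta> at odd ones.  Splitting the sum over i by the
   parity of n - i gives the two formulas. *)

section \<open>Generalised and nested sums\<close>

lemma gsum_eq_gsum_pred_plus: "gsum c m f = gsum c (m - 1) f + f m"
proof -
  consider "c \<le> m - 1" | "c = m" | "m < c" by linarith
  then show ?thesis
  proof cases
    case 1
    then have "{c..m} = insert m {c..m - 1}" by auto
    with 1 show ?thesis by (simp add: gsum_def)
  next
    case 2
    then show ?thesis by (simp add: gsum_def)
  next
    case 3
    then have "{m..c - 1} = insert m {m + 1..c - 1}" by auto
    with 3 show ?thesis by (simp add: gsum_def)
  qed
qed

lemma gsum_eqI:
  assumes "H (c - 1) = 0" and "\<And>k. H k = H (k - 1) + f k"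
  shows "gsum c m f = H m"
proof (induction m rule: int_induct[where k = "c - 1"])
  case base
  then show ?case using assms(1) by (simp add: gsum_def)
next
  case (step1 i)
  then show ?case using gsum_eq_gsum_pred_plus[of c "i + 1" f] assms(2)[of "i + 1"] by simp
next
  case (step2 i)
  then show ?case using gsum_eq_gsum_pred_plus[of c i f] assms(2)[of i] by simp
qed

lemma gsum_linear: "gsum c m (\<lambda>k. u * f k + v * g k) = u * gsum c m f + v * gsum c m g"
  by (simp add: gsum_def sum.distrib sum_distrib_left algebra_simps)

lemma nested_sum_linear:
  "nested_sum c n (\<lambda>k. u * f k + v * g k) m = u * nested_sum c n f m + v * nested_sum c n g m"
proof (induction n arbitrary: m)
  case (Suc n)
  then have "nested_sum c n (\<lambda>k. u * f k + v * g k)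
      = (\<lambda>m. u * nested_sum c n f m + v * nested_sum c n g m)"
    by auto
  then show ?case by (simp add: gsum_linear)
qed simp

lemma sum_lessThan_split_parity:
  fixes f :: "nat \<Rightarrow> 'a :: comm_monoid_add"
  assumes "n > 0"
  shows "(\<Sum>i<n. f i) = (\<Sum>j = 0..(n - 1) div 2. f (2 * j)) + (\<Sum>j = 1..n div 2. f (2 * j - 1))"
  using assms
proof (induction n rule: nat_induct_non_zero)
  case (Suc n)
  show ?case
  proof (cases "even n")
    case True
    then obtain k where "n = 2 * k" and "k > 0"
      using Suc by auto
    moreover have "{0..k} = insert k {0..k - 1}" and "(2 * k - 1) div 2 = k - 1"
      using \<open>k > 0\<close> by auto
    ultimately show ?thesis
      using Suc.IH by (simp add: ac_simps)
  next
    case False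
    then obtain k where "n = 2 * k + 1"
      by (metis oddE)
    then show ?thesis
      using Suc.IH by (simp add: add.assoc)
  qed
qed simp

lemma sum_gchoose_diagonal_diff:
  fixes u :: "nat \<Rightarrow> 'a :: field_char_0"
  shows "(\<Sum>i<Suc n. u i * (of_int (x + int i) gchoose i))
       = (\<Sum>i<Suc n. u i * (of_int (x - 1 + int i) gchoose i))
         + (\<Sum>i<n. u (Suc i) * (of_int (x + int i) gchoose i))"
proof -
  have "(of_int (x + int (Suc i)) gchoose Suc i :: 'a)
      = (of_int (x - 1 + int (Suc i)) gchoose Suc i) + (of_int (x + int i) gchoose i)" for i
    using gbinomial_Suc_Suc[of "of_int (x + int i) :: 'a" i] by (simp add: add_ac)
  then show ?thesis
    by (simp only: sum.lessThan_Suc_shift) (simp add: sum.distrib algebra_simps)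
qed

lemma nested_sum_powi:
  fixes t :: complex
  assumes "t \<noteq> 0" and "t \<noteq> 1"
  defines "\<tau> \<equiv> t / (t - 1)"
  shows "nested_sum c n (\<lambda>k. t powi k) m
       = \<tau> ^ n * t powi m
         - t powi (c - 1) * (\<Sum>i<n. \<tau> ^ (n - i) * (of_int (m - c + int i) gchoose i))"
proof (induction n arbitrary: m)
  case (Suc n)
  define H where "H n m = \<tau> ^ n * t powi m
      - t powi (c - 1) * (\<Sum>i<n. \<tau> ^ (n - i) * (of_int (m - c + int i) gchoose i))" for n m
  have "\<tau> * (t powi k - t powi (k - 1)) = t powi k" for k
  proof -
    have "t powi k = t * t powi (k - 1)"
      using \<open>t \<noteq> 0\<close> by (simp add: power_int_diff)
    then show ?thesis
      using \<open>t \<noteq> 1\<close> unfolding \<tau>_def by (simp add: field_simps)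
  qed
  then have "\<tau> ^ Suc n * (t powi k - t powi (k - 1)) = \<tau> ^ n * t powi k" for k
    by (metis mult.assoc power_Suc2)
  then have geometric_step:
      "\<tau> ^ Suc n * t powi k = \<tau> ^ Suc n * t powi (k - 1) + \<tau> ^ n * t powi k" for k
    by (simp add: algebra_simps)
  have "gsum c m (H n) = H (Suc n) m"
  proof (rule gsum_eqI)
    have "(\<Sum>i<Suc n. \<tau> ^ (Suc n - i) * (of_int (c - 1 - c + int i) gchoose i)) = \<tau> ^ Suc n"
      by (subst sum.lessThan_Suc_shift) (simp add: binomial_gbinomial[symmetric] binomial_eq_0)
    then show "H (Suc n) (c - 1) = 0"
      unfolding H_def by simp
  next
    fix k
    have "(\<Sum>i<Suc n. \<tau> ^ (Suc n - i) * (of_int (k - c + int i) gchoose i))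
        = (\<Sum>i<Suc n. \<tau> ^ (Suc n - i) * (of_int (k - 1 - c + int i) gchoose i))
          + (\<Sum>i<n. \<tau> ^ (n - i) * (of_int (k - c + int i) gchoose i))"
      using sum_gchoose_diagonal_diff[where u = "\<lambda>i. \<tau> ^ (Suc n - i)" and n = n and x = "k - c"]
      by (simp only: diff_Suc_Suc diff_right_commute[of k 1 c])
    then show "H (Suc n) k = H (Suc n) (k - 1) + H n k"
      unfolding H_def geometric_step[of k] by (simp add: algebra_simps)
  qed
  moreover have "nested_sum c n (\<lambda>k. t powi k) = H n"
    using Suc by (auto simp: H_def)
  ultimately show ?case
    by (simp add: H_def)
qed simp

section \<open>Binet formulas\<close>

lemma Wpos_binet:
  assumes "\<alpha> * \<beta> = q" and "\<alpha> + \<beta> = p"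
  shows "(\<alpha> - \<beta>) * Wpos a b p q n = (b - a * \<beta>) * \<alpha> ^ n + (a * \<alpha> - b) * \<beta> ^ n"
proof (induction n rule: induct_nat_012)
  case (ge2 n)
  have "(\<alpha> - \<beta>) * Wpos a b p q (Suc (Suc n))
      = p * ((\<alpha> - \<beta>) * Wpos a b p q (Suc n)) - q * ((\<alpha> - \<beta>) * Wpos a b p q n)"
    by (simp add: algebra_simps)
  also have "\<dots> = (b - a * \<beta>) * \<alpha> ^ Suc (Suc n) + (a * \<alpha> - b) * \<beta> ^ Suc (Suc n)"
    unfolding ge2 by (simp add: assms[symmetric] algebra_simps)
  finally show ?case .
qed (simp_all add: algebra_simps)

lemma Wneg_binet:
  assumes "\<alpha> * \<beta> = q" and "\<alpha> + \<beta> = p" and "q \<noteq> 0"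
  shows "(\<alpha> - \<beta>) * Wneg a b p q n = (b - a * \<beta>) * inverse \<alpha> ^ n + (a * \<alpha> - b) * inverse \<beta> ^ n"
proof -
  from assms have "\<alpha> \<noteq> 0" "\<beta> \<noteq> 0"
    by auto
  show ?thesis
  proof (induction n rule: induct_nat_012)
    case 1
    show ?case
      using \<open>\<alpha> \<noteq> 0\<close> \<open>\<beta> \<noteq> 0\<close> by (simp add: assms(1,2)[symmetric] field_simps)
  next
    case (ge2 n)
    have "(\<alpha> - \<beta>) * Wneg a b p q (Suc (Suc n))
        = (p * ((\<alpha> - \<beta>) * Wneg a b p q (Suc n)) - (\<alpha> - \<beta>) * Wneg a b p q n) / q"
      using \<open>q \<noteq> 0\<close> by (simp add: field_simps)
    also have "\<dots> = (b - a * \<beta>) * inverse \<alpha> ^ Suc (Suc n) + (a * \<alpha> - b) * inverse \<beta> ^ Suc (Suc n)"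
      using \<open>\<alpha> \<noteq> 0\<close> \<open>\<beta> \<noteq> 0\<close> unfolding ge2 by (simp add: assms(1,2)[symmetric] field_simps)
    finally show ?case .
  qed (simp add: algebra_simps)
qed

lemma W_binet:
  assumes "\<alpha> * \<beta> = q" and "\<alpha> + \<beta> = p" and "\<alpha> \<noteq> \<beta>" and "q \<noteq> 0"
  shows "W a b p q j = (b - a * \<beta>) / (\<alpha> - \<beta>) * \<alpha> powi j + (a * \<alpha> - b) / (\<alpha> - \<beta>) * \<beta> powi j"
proof -
  have "(\<alpha> - \<beta>) * W a b p q j = (b - a * \<beta>) * \<alpha> powi j + (a * \<alpha> - b) * \<beta> powi j"
    using Wpos_binet[OF assms(1,2)] Wneg_binet[OF assms(1,2,4)] by (simp add: W_def power_int_def)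
  with \<open>\<alpha> \<noteq> \<beta>\<close> have "W a b p q j = ((b - a * \<beta>) * \<alpha> powi j + (a * \<alpha> - b) * \<beta> powi j) / (\<alpha> - \<beta>)"
    by (simp add: nonzero_eq_divide_eq mult.commute)
  then show ?thesis
    by (simp add: add_divide_distrib)
qed

lemma U_binet:
  assumes "\<alpha> * \<beta> = q" and "\<alpha> + \<beta> = p" and "\<alpha> \<noteq> \<beta>" and "q \<noteq> 0"
  shows "(\<alpha> - \<beta>) * U p q j = \<alpha> powi j - \<beta> powi j"
  unfolding U_def W_binet[OF assms] using assms(3)
  by (simp add: distrib_left mult.assoc[symmetric] right_diff_distrib)

lemma V_binet:
  assumes "\<alpha> * \<beta> = q" and "\<alpha> + \<beta> = p" and "\<alpha> \<noteq> \<beta>" and "q \<noteq> 0"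
  shows "V p q j = \<alpha> powi j + \<beta> powi j"
proof -
  have "(p - 2 * \<beta>) / (\<alpha> - \<beta>) = 1" "(2 * \<alpha> - p) / (\<alpha> - \<beta>) = 1"
    using assms(2,3) by (auto simp: field_simps)
  then show ?thesis
    unfolding V_def W_binet[OF assms] by simp
qed

lemma Delta_roots:
  obtains \<alpha> \<beta> where "\<alpha> * \<beta> = q" and "\<alpha> + \<beta> = p" and "\<alpha> - \<beta> = Delta p q"
proof
  have "Delta p q ^ 2 = p ^ 2 - 4 * q"
    by (simp add: Delta_def)
  then show "(p + Delta p q) / 2 * ((p - Delta p q) / 2) = q"
    by (simp add: field_simps power2_eq_square)
qed (simp_all add: field_simps)

(* The sign (-1)^e on the \<beta>-part reflects the two geometric ratios K \<alpha>^(r+d) and -K \<beta>^(r+d)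
   of the Binet decomposition. *)
definition binet_signed :: "complex \<Rightarrow> complex \<Rightarrow> complex \<Rightarrow> complex \<Rightarrow> nat \<Rightarrow> int \<Rightarrow> complex" where
  "binet_signed a b \<alpha> \<beta> e j = (b - a * \<beta>) * \<alpha> powi j + (-1) ^ e * (a * \<alpha> - b) * \<beta> powi j"

lemma binet_signed_even:
  assumes "\<alpha> * \<beta> = q" and "\<alpha> + \<beta> = p" and "\<alpha> \<noteq> \<beta>" and "q \<noteq> 0" and "even e"
  shows "binet_signed a b \<alpha> \<beta> e j = (\<alpha> - \<beta>) * W a b p q j"
  unfolding W_binet[OF assms(1-4)] binet_signed_def using assms(3,5)
  by (simp add: distrib_left mult.assoc[symmetric])

lemma binet_signed_odd:
  assumes "\<alpha> * \<beta> = q" and "\<alpha> + \<beta> = p" and "\<alpha> \<noteq> \<beta>" and "q \<noteq> 0" and "odd e"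
  shows "binet_signed a b \<alpha> \<beta> e j = W a b p q (j + 1) - q * W a b p q (j - 1)"
proof -
  define A B where "A = (b - a * \<beta>) / (\<alpha> - \<beta>)" and "B = (a * \<alpha> - b) / (\<alpha> - \<beta>)"
  have "\<alpha> \<noteq> 0" "\<beta> \<noteq> 0"
    using assms by auto
  then have shift: "\<alpha> powi (j + 1) - q * \<alpha> powi (j - 1) = (\<alpha> - \<beta>) * \<alpha> powi j"
    "\<beta> powi (j + 1) - q * \<beta> powi (j - 1) = - ((\<alpha> - \<beta>) * \<beta> powi j)"
    by (simp_all add: assms(1)[symmetric] power_int_add power_int_diff field_simps)
  have "W a b p q (j + 1) - q * W a b p q (j - 1)
      = A * (\<alpha> powi (j + 1) - q * \<alpha> powi (j - 1)) + B * (\<beta> powi (j + 1) - q * \<beta> powi (j - 1))"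
    unfolding W_binet[OF assms(1-4)] A_def B_def by (simp add: algebra_simps)
  also have "\<dots> = A * ((\<alpha> - \<beta>) * \<alpha> powi j) - B * ((\<alpha> - \<beta>) * \<beta> powi j)"
    using shift by simp
  also have "\<dots> = binet_signed a b \<alpha> \<beta> e j"
  proof -
    have "A * (\<alpha> - \<beta>) = b - a * \<beta>" "B * (\<alpha> - \<beta>) = a * \<alpha> - b"
      using assms(3) by (simp_all add: A_def B_def)
    with assms(5) show ?thesis
      by (simp add: binet_signed_def mult.assoc[symmetric]) (simp add: algebra_simps)
  qed
  finally show ?thesis ..
qed

section \<open>Nested sums of Horadam sequences\<close>

(* With u = \<alpha>^r, v = \<beta>^r, y = \<alpha>^d, z = \<beta>^d, t is x \<alpha>^r for x = V_d / V_(r+d). *)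
lemma geometric_ratio_identity:
  fixes u v y z :: "'a :: field"
  assumes "u \<noteq> 0" "y \<noteq> 0" "z \<noteq> 0" "u \<noteq> v" "y + z \<noteq> 0" "u * y + v * z \<noteq> 0"
  defines "t \<equiv> (y + z) / (u * y + v * z) * u"
  shows "t \<noteq> 0" and "t \<noteq> 1" and "t / (t - 1) = (y + z) / (y * z * (u - v)) * (u * y)"
proof -
  have t_minus_1: "t - 1 = z * (u - v) / (u * y + v * z)"
    using assms(6) unfolding t_def by (simp add: field_simps)
  show "t \<noteq> 0"
    using assms unfolding t_def by simp
  show "t \<noteq> 1"
    using assms t_minus_1 by auto
  have "t / (t - 1) = ((y + z) * u / (u * y + v * z)) / (z * (u - v) / (u * y + v * z))"
    unfolding t_minus_1 unfolding t_def by simp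
  also have "\<dots> = (y + z) * u / (z * (u - v))"
    using assms(6) by simp
  also have "\<dots> = (y + z) / (y * z * (u - v)) * (u * y)"
    using assms(2) by simp
  finally show "t / (t - 1) = (y + z) / (y * z * (u - v)) * (u * y)" .
qed

lemma powi_regroup:
  fixes z :: complex
  assumes "z \<noteq> 0"
  shows "z powi s * ((w * z powi (r + d)) ^ e * (x * z powi r) powi k)
       = w ^ e * x powi k * z powi ((r + d) * int e + r * k + s)"
proof -
  have "(w * z powi (r + d)) ^ e = w ^ e * z powi ((r + d) * int e)"
    by (simp add: power_mult_distrib power_int_power')
  moreover have "(x * z powi r) powi k = x powi k * z powi (r * k)"
    by (simp add: power_int_mult_distrib power_int_mult)
  moreover have
    "z powi ((r + d) * int e + r * k + s) = z powi ((r + d) * int e) * z powi (r * k) * z powi s"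
    using assms by (simp add: power_int_add)
  ultimately show ?thesis
    by (simp only: ac_simps)
qed

lemma nested_sum_powi_scaled:
  fixes z w x :: complex and r d :: int
  defines "t \<equiv> x * z powi r"
  assumes "z \<noteq> 0" and "t \<noteq> 0" and "t \<noteq> 1" and ratio: "t / (t - 1) = w * z powi (r + d)"
  shows "z powi s * nested_sum c n (\<lambda>k. t powi k) m
       = w ^ n * x powi m * z powi ((r + d) * int n + r * m + s)
         - x powi (c - 1)
           * (\<Sum>i<n. w ^ (n - i) * (of_int (m - c + int i) gchoose i)
                * z powi ((r + d) * int (n - i) + r * (c - 1) + s))"
proof -
  have "z powi s * nested_sum c n (\<lambda>k. t powi k) m
      = z powi s * ((w * z powi (r + d)) ^ n * t powi m)
        - (\<Sum>i<n. (of_int (m - c + int i) gchoose i)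
                     * (z powi s * ((w * z powi (r + d)) ^ (n - i) * t powi (c - 1))))"
    unfolding nested_sum_powi[OF \<open>t \<noteq> 0\<close> \<open>t \<noteq> 1\<close>] ratio
    by (simp add: right_diff_distrib sum_distrib_left mult_ac)
  then show ?thesis
    unfolding t_def powi_regroup[OF \<open>z \<noteq> 0\<close>] by (simp add: sum_distrib_left mult_ac)
qed

lemma horadam_geometric_ratio:
  assumes roots: "\<alpha> * \<beta> = q" "\<alpha> + \<beta> = p" "\<alpha> \<noteq> \<beta>" "q \<noteq> 0"
    and nonzero: "V p q d \<noteq> 0" "V p q (r + d) \<noteq> 0" "U p q r \<noteq> 0"
  defines "x \<equiv> V p q d / V p q (r + d)" and "K \<equiv> V p q d / (q powi d * (\<alpha> - \<beta>) * U p q r)"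
  shows "x * \<alpha> powi r \<noteq> 0" and "x * \<alpha> powi r \<noteq> 1"
    and "x * \<alpha> powi r / (x * \<alpha> powi r - 1) = K * \<alpha> powi (r + d)"
proof -
  have "\<alpha> \<noteq> 0" "\<beta> \<noteq> 0"
    using roots by auto
  then have nz: "\<alpha> powi j \<noteq> 0" "\<beta> powi j \<noteq> 0" for j
    by auto
  have V: "V p q j = \<alpha> powi j + \<beta> powi j" for j
    using V_binet[OF roots] .
  have powi_rd: "\<alpha> powi (r + d) = \<alpha> powi r * \<alpha> powi d" "\<beta> powi (r + d) = \<beta> powi r * \<beta> powi d"
    using \<open>\<alpha> \<noteq> 0\<close> \<open>\<beta> \<noteq> 0\<close> by (simp_all add: power_int_add)
  have "q powi d * (\<alpha> - \<beta>) * U p q r = \<alpha> powi d * \<beta> powi d * (\<alpha> powi r - \<beta> powi r)"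
    using U_binet[OF roots, of r]
    by (simp add: roots(1)[symmetric] power_int_mult_distrib mult.assoc)
  then have K_eq: "K = (\<alpha> powi d + \<beta> powi d) / (\<alpha> powi d * \<beta> powi d * (\<alpha> powi r - \<beta> powi r))"
    unfolding K_def V by simp
  have x_eq: "x = (\<alpha> powi d + \<beta> powi d) / (\<alpha> powi r * \<alpha> powi d + \<beta> powi r * \<beta> powi d)"
    unfolding x_def V powi_rd ..
  have "\<alpha> powi r \<noteq> \<beta> powi r"
    using U_binet[OF roots, of r] nonzero(3) roots(3) by auto
  moreover have "\<alpha> powi d + \<beta> powi d \<noteq> 0" "\<alpha> powi r * \<alpha> powi d + \<beta> powi r * \<beta> powi d \<noteq> 0"
    using nonzero(1,2) unfolding V powi_rd by auto
  ultimately show "x * \<alpha> powi r \<noteq> 0" "x * \<alpha> powi r \<noteq> 1"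
    "x * \<alpha> powi r / (x * \<alpha> powi r - 1) = K * \<alpha> powi (r + d)"
    using geometric_ratio_identity[OF nz(1)[of r] nz(1)[of d] nz(2)[of d]]
    unfolding x_eq K_eq powi_rd by blast+
qed

lemma horadam_geometric_ratio_conj:
  assumes roots: "\<alpha> * \<beta> = q" "\<alpha> + \<beta> = p" "\<alpha> \<noteq> \<beta>" "q \<noteq> 0"
    and nonzero: "V p q d \<noteq> 0" "V p q (r + d) \<noteq> 0" "U p q r \<noteq> 0"
  defines "x \<equiv> V p q d / V p q (r + d)" and "K \<equiv> V p q d / (q powi d * (\<alpha> - \<beta>) * U p q r)"
  shows "x * \<beta> powi r \<noteq> 0" and "x * \<beta> powi r \<noteq> 1"
    and "x * \<beta> powi r / (x * \<beta> powi r - 1) = - K * \<beta> powi (r + d)"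
proof -
  have "\<beta> - \<alpha> = - (\<alpha> - \<beta>)"
    by simp
  then have "V p q d / (q powi d * (\<beta> - \<alpha>) * U p q r) = - K"
    unfolding K_def by (simp only: mult_minus_left mult_minus_right divide_minus_right)
  moreover have "\<beta> * \<alpha> = q" "\<beta> + \<alpha> = p" "\<beta> \<noteq> \<alpha>"
    using roots by (simp_all add: ac_simps)
  ultimately show "x * \<beta> powi r \<noteq> 0" "x * \<beta> powi r \<noteq> 1"
    "x * \<beta> powi r / (x * \<beta> powi r - 1) = - K * \<beta> powi (r + d)"
    using horadam_geometric_ratio[of \<beta> \<alpha>, OF _ _ _ roots(4) nonzero, folded x_def] by simp_all
qed

lemma powi_mult_W_binet:
  assumes "\<alpha> * \<beta> = q" and "\<alpha> + \<beta> = p" and "\<alpha> \<noteq> \<beta>" and "q \<noteq> 0"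
  shows "x powi k * W a b p q (r * k + s)
       = (b - a * \<beta>) * \<alpha> powi s / (\<alpha> - \<beta>) * (x * \<alpha> powi r) powi k
         + (a * \<alpha> - b) * \<beta> powi s / (\<alpha> - \<beta>) * (x * \<beta> powi r) powi k"
proof -
  have "\<alpha> \<noteq> 0" "\<beta> \<noteq> 0"
    using assms by auto
  moreover have "z powi (r * k + s) = (z powi r) powi k * z powi s" if "z \<noteq> 0" for z :: complex
    using that by (simp add: power_int_add power_int_mult)
  ultimately show ?thesis
    unfolding W_binet[OF assms] by (simp add: power_int_mult_distrib algebra_simps)
qed

lemma nested_sum_horadam_binet:
  assumes roots: "\<alpha> * \<beta> = q" "\<alpha> + \<beta> = p" "\<alpha> \<noteq> \<beta>" "q \<noteq> 0"
    and nonzero: "V p q d \<noteq> 0" "V p q (r + d) \<noteq> 0" "U p q r \<noteq> 0"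
  defines "x \<equiv> V p q d / V p q (r + d)" and "K \<equiv> V p q d / (q powi d * (\<alpha> - \<beta>) * U p q r)"
  shows "(\<alpha> - \<beta>) * nested_sum c n (\<lambda>k. x powi k * W a b p q (r * k + s)) m
       = K ^ n * x powi m * binet_signed a b \<alpha> \<beta> n ((r + d) * int n + r * m + s)
         - x powi (c - 1)
           * (\<Sum>i<n. K ^ (n - i) * (of_int (m - c + int i) gchoose i)
                * binet_signed a b \<alpha> \<beta> (n - i) ((r + d) * int (n - i) + r * (c - 1) + s))"
proof -
  have "\<alpha> \<noteq> 0" "\<beta> \<noteq> 0"
    using roots by auto
  note ratio_\<alpha> = horadam_geometric_ratio[OF roots nonzero, folded x_def K_def]
  note ratio_\<beta> = horadam_geometric_ratio_conj[OF roots nonzero, folded x_def K_def]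
  define A B where "A = b - a * \<beta>" and "B = a * \<alpha> - b"
  note summand = powi_mult_W_binet[OF roots, of x _ a b, folded A_def B_def]
  have "nested_sum c n (\<lambda>k. x powi k * W a b p q (r * k + s)) m
      = (A * (\<alpha> powi s * nested_sum c n (\<lambda>k. (x * \<alpha> powi r) powi k) m)
        + B * (\<beta> powi s * nested_sum c n (\<lambda>k. (x * \<beta> powi r) powi k) m)) / (\<alpha> - \<beta>)"
    unfolding summand nested_sum_linear by (simp add: add_divide_distrib mult.assoc)
  then have "(\<alpha> - \<beta>) * nested_sum c n (\<lambda>k. x powi k * W a b p q (r * k + s)) m
      = A * (\<alpha> powi s * nested_sum c n (\<lambda>k. (x * \<alpha> powi r) powi k) m)
        + B * (\<beta> powi s * nested_sum c n (\<lambda>k. (x * \<beta> powi r) powi k) m)"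
    using roots(3) by simp
  also have "\<dots> = A * (K ^ n * x powi m * \<alpha> powi ((r + d) * int n + r * m + s)
          - x powi (c - 1)
            * (\<Sum>i<n. K ^ (n - i) * (of_int (m - c + int i) gchoose i)
                 * \<alpha> powi ((r + d) * int (n - i) + r * (c - 1) + s)))
        + B * ((- K) ^ n * x powi m * \<beta> powi ((r + d) * int n + r * m + s)
          - x powi (c - 1)
            * (\<Sum>i<n. (- K) ^ (n - i) * (of_int (m - c + int i) gchoose i)
                 * \<beta> powi ((r + d) * int (n - i) + r * (c - 1) + s)))"
    unfolding nested_sum_powi_scaled[OF \<open>\<alpha> \<noteq> 0\<close> ratio_\<alpha>]
      nested_sum_powi_scaled[OF \<open>\<beta> \<noteq> 0\<close> ratio_\<beta>] ..
  also have "\<dots> = K ^ n * x powi m * binet_signed a b \<alpha> \<beta> n ((r + d) * int n + r * m + s)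
         - x powi (c - 1)
           * (\<Sum>i<n. K ^ (n - i) * (of_int (m - c + int i) gchoose i)
                * binet_signed a b \<alpha> \<beta> (n - i) ((r + d) * int (n - i) + r * (c - 1) + s))"
    unfolding binet_signed_def A_def[symmetric] B_def[symmetric]
    by (simp add: power_minus[of K] sum.distrib sum_distrib_left algebra_simps)
  finally show ?thesis .
qed

definition W_parity :: "complex \<Rightarrow> complex \<Rightarrow> complex \<Rightarrow> complex \<Rightarrow> nat \<Rightarrow> int \<Rightarrow> complex" where
  "W_parity a b p q e j =
     (if even e then W a b p q j else (W a b p q (j + 1) - q * W a b p q (j - 1)) / Delta p q)"

lemma nested_sum_horadam:
  assumes "p\<^sup>2 - 4 * q \<noteq> 0" and "q \<noteq> 0"
    and "V p q d \<noteq> 0" and "V p q (r + d) \<noteq> 0" and "U p q r \<noteq> 0"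
  defines "x \<equiv> V p q d / V p q (r + d)" and "K \<equiv> V p q d / (q powi d * Delta p q * U p q r)"
  shows "nested_sum c n (\<lambda>k. x powi k * W a b p q (r * k + s)) m
       = K ^ n * x powi m * W_parity a b p q n ((r + d) * int n + r * m + s)
         - x powi (c - 1)
           * (\<Sum>i<n. K ^ (n - i) * (of_int (m - c + int i) gchoose i)
                * W_parity a b p q (n - i) ((r + d) * int (n - i) + r * (c - 1) + s))"
proof -
  obtain \<alpha> \<beta> where roots: "\<alpha> * \<beta> = q" "\<alpha> + \<beta> = p" and D: "\<alpha> - \<beta> = Delta p q"
    using Delta_roots .
  have "Delta p q \<noteq> 0"
    using assms(1) by (auto simp: Delta_def)
  with D have "\<alpha> \<noteq> \<beta>"
    by auto
  have binet_W_parity: "binet_signed a b \<alpha> \<beta> e j = Delta p q * W_parity a b p q e j" for e j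
    using binet_signed_even[OF roots \<open>\<alpha> \<noteq> \<beta>\<close> \<open>q \<noteq> 0\<close>] binet_signed_odd[OF roots \<open>\<alpha> \<noteq> \<beta>\<close> \<open>q \<noteq> 0\<close>]
      \<open>Delta p q \<noteq> 0\<close> by (simp add: W_parity_def D)
  have "Delta p q * nested_sum c n (\<lambda>k. x powi k * W a b p q (r * k + s)) m
      = Delta p q * (K ^ n * x powi m * W_parity a b p q n ((r + d) * int n + r * m + s)
         - x powi (c - 1)
           * (\<Sum>i<n. K ^ (n - i) * (of_int (m - c + int i) gchoose i)
                * W_parity a b p q (n - i) ((r + d) * int (n - i) + r * (c - 1) + s)))"
    using nested_sum_horadam_binet[OF roots \<open>\<alpha> \<noteq> \<beta>\<close> \<open>q \<noteq> 0\<close> assms(3-5),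
        where a = a and b = b and s = s]
    unfolding binet_W_parity D x_def[symmetric] K_def[symmetric]
    by (simp add: sum_distrib_left right_diff_distrib mult_ac)
  with \<open>Delta p q \<noteq> 0\<close> show ?thesis
    by simp
qed

lemma nested_sum_horadam_split:
  assumes "p\<^sup>2 - 4 * q \<noteq> 0" and "q \<noteq> 0"
    and "V p q d \<noteq> 0" and "V p q (r + d) \<noteq> 0" and "U p q r \<noteq> 0" and "n > 0"
  defines "x \<equiv> V p q d / V p q (r + d)" and "K \<equiv> V p q d / (q powi d * Delta p q * U p q r)"
  shows "nested_sum c n (\<lambda>k. x powi k * W a b p q (r * k + s)) m
       = K ^ n * x powi m * W_parity a b p q n ((r + d) * int n + r * m + s)
         - x powi (c - 1) *
           ((\<Sum>j = 0..(n - 1) div 2. K ^ (n - 2 * j) * (of_int (m + 2 * int j - c) gchoose (2 * j))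
               * W_parity a b p q (n - 2 * j) ((r + d) * (int n - 2 * int j) + r * (c - 1) + s))
          + (\<Sum>j = 1..n div 2. K ^ (n - 2 * j + 1)
               * (of_int (m + 2 * int j - 1 - c) gchoose (2 * j - 1))
               * W_parity a b p q (n - 2 * j + 1)
                   ((r + d) * (int n - 2 * int j + 1) + r * (c - 1) + s)))"
proof -
  have split: "(\<Sum>i<n. K ^ (n - i) * (of_int (m - c + int i) gchoose i)
                  * W_parity a b p q (n - i) ((r + d) * int (n - i) + r * (c - 1) + s))
      = (\<Sum>j = 0..(n - 1) div 2. K ^ (n - 2 * j) * (of_int (m + 2 * int j - c) gchoose (2 * j))
               * W_parity a b p q (n - 2 * j) ((r + d) * (int n - 2 * int j) + r * (c - 1) + s))
        + (\<Sum>j = 1..n div 2. K ^ (n - 2 * j + 1)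
               * (of_int (m + 2 * int j - 1 - c) gchoose (2 * j - 1))
               * W_parity a b p q (n - 2 * j + 1)
                   ((r + d) * (int n - 2 * int j + 1) + r * (c - 1) + s))"
    unfolding sum_lessThan_split_parity[OF \<open>n > 0\<close>]
  proof (intro arg_cong2[where f = "(+)"] sum.cong refl)
    fix j
    assume "j \<in> {0..(n - 1) div 2}"
    with \<open>n > 0\<close> have "2 * j \<le> n"
      by auto
    then show "K ^ (n - 2 * j) * (of_int (m - c + int (2 * j)) gchoose (2 * j))
          * W_parity a b p q (n - 2 * j) ((r + d) * int (n - 2 * j) + r * (c - 1) + s)
        = K ^ (n - 2 * j) * (of_int (m + 2 * int j - c) gchoose (2 * j))
          * W_parity a b p q (n - 2 * j) ((r + d) * (int n - 2 * int j) + r * (c - 1) + s)"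
      by (simp add: algebra_simps)
  next
    fix j
    assume "j \<in> {1..n div 2}"
    then have "n - (2 * j - 1) = n - 2 * j + 1" "int (n - 2 * j + 1) = int n - 2 * int j + 1"
      "int (2 * j - 1) = 2 * int j - 1"
      by auto
    then show "K ^ (n - (2 * j - 1)) * (of_int (m - c + int (2 * j - 1)) gchoose (2 * j - 1))
          * W_parity a b p q (n - (2 * j - 1)) ((r + d) * int (n - (2 * j - 1)) + r * (c - 1) + s)
        = K ^ (n - 2 * j + 1) * (of_int (m + 2 * int j - 1 - c) gchoose (2 * j - 1))
          * W_parity a b p q (n - 2 * j + 1) ((r + d) * (int n - 2 * int j + 1) + r * (c - 1) + s)"
      by (simp add: algebra_simps)
  qed
  show ?thesis
    using nested_sum_horadam[OF assms(1-5), where a = a and b = b and c = c and n = n and s = s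
        and m = m]
    unfolding x_def[symmetric] K_def[symmetric] split .
qed

lemma power_scaling_term:
  fixes D Q R :: "'a :: field"
  assumes "D \<noteq> 0" and "Q \<noteq> 0" and "N = k + e + l"
  shows "1 / D ^ N * (D ^ k / Q ^ e * R ^ e * Y * g) = (R / (Q * D)) ^ e * g * (Y / D ^ l)"
  using assms by (simp add: power_add field_simps power_mult_distrib power_divide)

lemma W_parity_scaling_even:
  assumes "Delta p q \<noteq> 0" and "q \<noteq> 0" and "t = int e" and "N = k + e" and "even e"
  shows "1 / Delta p q ^ N * (Delta p q ^ k / q powi (d * t) * R ^ e * W a b p q j * g)
       = (R / (q powi d * Delta p q)) ^ e * g * W_parity a b p q e j"
  using power_scaling_term[of "Delta p q" "q powi d" N k e 0] assms
  by (simp add: W_parity_def power_int_power')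

lemma W_parity_scaling_odd:
  assumes "Delta p q \<noteq> 0" and "q \<noteq> 0" and "t = int e" and "N = k + e + 1" and "odd e"
  shows "1 / Delta p q ^ N * (Delta p q ^ k / q powi (d * t) * R ^ e
           * (W a b p q (j + 1) - q * W a b p q (j - 1)) * g)
       = (R / (q powi d * Delta p q)) ^ e * g * W_parity a b p q e j"
  using power_scaling_term[of "Delta p q" "q powi d" N k e 1] assms
  by (simp add: W_parity_def power_int_power')

lemma nested_sum_horadam_even:
  fixes a b p q :: complex and r s c d an :: int and n :: nat
  assumes "q \<noteq> 0" and "p\<^sup>2 - 4 * q \<noteq> 0"
    and "V p q d \<noteq> 0" and "V p q (r + d) \<noteq> 0" and "U p q r \<noteq> 0"
    and "n > 0" and "even n"
  shows "nested_sum c n (\<lambda>a0. (V p q d / V p q (r + d)) powi a0 * W a b p q (r * a0 + s)) an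
      = 1 / (q powi (d * int n) * Delta p q ^ n) * (V p q d / U p q r) ^ n
          * (V p q d / V p q (r + d)) powi an * W a b p q (r * (int n + an) + d * int n + s)
        - (V p q d / V p q (r + d)) powi (c - 1) * (1 / Delta p q ^ n) *
          (\<Sum>j = 0..(n - 2) div 2. Delta p q ^ (2 * j) / q powi (d * (int n - 2 * int j))
             * (V p q d / U p q r) ^ (n - 2 * j)
             * W a b p q ((r + d) * (int n - 2 * int j) + r * (c - 1) + s)
             * (of_int (an + 2 * int j - c) gchoose (2 * j)))
        - (V p q d / V p q (r + d)) powi (c - 1) * (1 / Delta p q ^ (n + 2)) *
          (\<Sum>j = 1..n div 2. Delta p q ^ (2 * j) / q powi (d * (int n - 2 * int j + 1))
             * (V p q d / U p q r) ^ (n - 2 * j + 1)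
             * (W a b p q ((r + d) * (int n - 2 * int j + 1) + r * (c - 1) + s + 1)
                - q * W a b p q ((r + d) * (int n - 2 * int j + 1) + r * (c - 1) + s - 1))
             * (of_int (an + 2 * int j - 1 - c) gchoose (2 * j - 1)))"
proof -
  define x R D K where "x = V p q d / V p q (r + d)" and "R = V p q d / U p q r"
    and "D = Delta p q" and "K = R / (q powi d * D)"
  have "D \<noteq> 0"
    using assms(2) by (auto simp: D_def Delta_def)
  have "V p q d / (q powi d * Delta p q * U p q r) = K"
    by (simp add: K_def R_def D_def)
  note split = nested_sum_horadam_split[OF assms(2,1,3-6),
      where a = a and b = b and c = c and s = s and m = an, unfolded this x_def[symmetric]]
  have "r * (int n + an) + d * int n + s = (r + d) * int n + r * an + s"
    by (simp add: algebra_simps)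
  then have main_term: "1 / (q powi (d * int n) * D ^ n) * R ^ n * x powi an
        * W a b p q (r * (int n + an) + d * int n + s)
      = K ^ n * x powi an * W_parity a b p q n ((r + d) * int n + r * an + s)"
    using W_parity_scaling_even[of p q "int n" n n 0 d R a b _ "x powi an"]
      \<open>D \<noteq> 0\<close> \<open>q \<noteq> 0\<close> \<open>even n\<close>
    by (simp add: K_def D_def mult_ac)
  have "(n - 2) div 2 = (n - 1) div 2"
    using \<open>even n\<close> \<open>n > 0\<close> by presburger
  then have even_terms: "1 / D ^ n *
        (\<Sum>j = 0..(n - 2) div 2. D ^ (2 * j) / q powi (d * (int n - 2 * int j)) * R ^ (n - 2 * j)
           * W a b p q ((r + d) * (int n - 2 * int j) + r * (c - 1) + s)
           * (of_int (an + 2 * int j - c) gchoose (2 * j)))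
      = (\<Sum>j = 0..(n - 1) div 2. K ^ (n - 2 * j) * (of_int (an + 2 * int j - c) gchoose (2 * j))
           * W_parity a b p q (n - 2 * j) ((r + d) * (int n - 2 * int j) + r * (c - 1) + s))"
    unfolding sum_distrib_left K_def D_def
    by (intro sum.cong refl W_parity_scaling_even)
      (use \<open>D \<noteq> 0\<close> \<open>q \<noteq> 0\<close> \<open>n > 0\<close> \<open>even n\<close> in \<open>auto simp: D_def\<close>)
  have odd_terms: "1 / D ^ (n + 2) *
        (\<Sum>j = 1..n div 2. D ^ (2 * j) / q powi (d * (int n - 2 * int j + 1)) * R ^ (n - 2 * j + 1)
           * (W a b p q ((r + d) * (int n - 2 * int j + 1) + r * (c - 1) + s + 1)
              - q * W a b p q ((r + d) * (int n - 2 * int j + 1) + r * (c - 1) + s - 1))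
           * (of_int (an + 2 * int j - 1 - c) gchoose (2 * j - 1)))
      = (\<Sum>j = 1..n div 2. K ^ (n - 2 * j + 1)
           * (of_int (an + 2 * int j - 1 - c) gchoose (2 * j - 1))
           * W_parity a b p q (n - 2 * j + 1)
               ((r + d) * (int n - 2 * int j + 1) + r * (c - 1) + s))"
    unfolding sum_distrib_left K_def D_def
    by (intro sum.cong refl W_parity_scaling_odd)
      (use \<open>D \<noteq> 0\<close> \<open>q \<noteq> 0\<close> \<open>even n\<close> in \<open>auto simp: D_def\<close>)
  show ?thesis
    unfolding x_def[symmetric] R_def[symmetric] D_def[symmetric] mult.assoc[of "x powi (c - 1)"]
      split main_term even_terms odd_terms
    by (simp add: right_diff_distrib distrib_left)
qed

lemma nested_sum_horadam_odd:
  fixes a b p q :: complex and r s c d an :: int and n :: nat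
  assumes "q \<noteq> 0" and "p\<^sup>2 - 4 * q \<noteq> 0"
    and "V p q d \<noteq> 0" and "V p q (r + d) \<noteq> 0" and "U p q r \<noteq> 0"
    and "odd n"
  shows "nested_sum c n (\<lambda>a0. (V p q d / V p q (r + d)) powi a0 * W a b p q (r * a0 + s)) an
      = 1 / (q powi (d * int n) * Delta p q ^ (n + 1)) * (V p q d / U p q r) ^ n
          * (V p q d / V p q (r + d)) powi an
          * (W a b p q (r * (int n + an) + d * int n + s + 1)
             - q * W a b p q (r * (int n + an) + d * int n + s - 1))
        - (V p q d / V p q (r + d)) powi (c - 1) * (1 / Delta p q ^ (n + 1)) *
          (\<Sum>j = 0..(n - 1) div 2. Delta p q ^ (2 * j) / q powi (d * (int n - 2 * int j))
             * (V p q d / U p q r) ^ (n - 2 * j)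
             * (W a b p q ((r + d) * (int n - 2 * int j) + r * (c - 1) + s + 1)
                - q * W a b p q ((r + d) * (int n - 2 * int j) + r * (c - 1) + s - 1))
             * (of_int (an + 2 * int j - c) gchoose (2 * j)))
        - (V p q d / V p q (r + d)) powi (c - 1) * (1 / Delta p q ^ (n + 1)) *
          (\<Sum>j = 1..(n - 1) div 2. Delta p q ^ (2 * j) / q powi (d * (int n - 2 * int j + 1))
             * (V p q d / U p q r) ^ (n - 2 * j + 1)
             * W a b p q ((r + d) * (int n - 2 * int j + 1) + r * (c - 1) + s)
             * (of_int (an + 2 * int j - 1 - c) gchoose (2 * j - 1)))"
proof -
  define x R D K where "x = V p q d / V p q (r + d)" and "R = V p q d / U p q r"
    and "D = Delta p q" and "K = R / (q powi d * D)"
  have "D \<noteq> 0" and "n > 0"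
    using assms(2) odd_pos[OF \<open>odd n\<close>] by (auto simp: D_def Delta_def)
  have "V p q d / (q powi d * Delta p q * U p q r) = K"
    by (simp add: K_def R_def D_def)
  note split = nested_sum_horadam_split[OF assms(2,1,3-5) \<open>n > 0\<close>,
      where a = a and b = b and c = c and s = s and m = an, unfolded this x_def[symmetric]]
  have "r * (int n + an) + d * int n + s = (r + d) * int n + r * an + s"
    by (simp add: algebra_simps)
  then have main_term: "1 / (q powi (d * int n) * D ^ (n + 1)) * R ^ n * x powi an
        * (W a b p q (r * (int n + an) + d * int n + s + 1)
           - q * W a b p q (r * (int n + an) + d * int n + s - 1))
      = K ^ n * x powi an * W_parity a b p q n ((r + d) * int n + r * an + s)"
    using W_parity_scaling_odd[of p q "int n" n "n + 1" 0 d R a b _ "x powi an"]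
      \<open>D \<noteq> 0\<close> \<open>q \<noteq> 0\<close> \<open>odd n\<close>
    by (simp add: K_def D_def mult_ac)
  have even_terms: "1 / D ^ (n + 1) *
        (\<Sum>j = 0..(n - 1) div 2. D ^ (2 * j) / q powi (d * (int n - 2 * int j)) * R ^ (n - 2 * j)
           * (W a b p q ((r + d) * (int n - 2 * int j) + r * (c - 1) + s + 1)
              - q * W a b p q ((r + d) * (int n - 2 * int j) + r * (c - 1) + s - 1))
           * (of_int (an + 2 * int j - c) gchoose (2 * j)))
      = (\<Sum>j = 0..(n - 1) div 2. K ^ (n - 2 * j) * (of_int (an + 2 * int j - c) gchoose (2 * j))
           * W_parity a b p q (n - 2 * j) ((r + d) * (int n - 2 * int j) + r * (c - 1) + s))"
    unfolding sum_distrib_left K_def D_def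
    by (intro sum.cong refl W_parity_scaling_odd)
      (use \<open>D \<noteq> 0\<close> \<open>q \<noteq> 0\<close> \<open>odd n\<close> in \<open>auto simp: D_def\<close>)
  have "(n - 1) div 2 = n div 2"
    using \<open>odd n\<close> by presburger
  then have odd_terms: "1 / D ^ (n + 1) *
        (\<Sum>j = 1..(n - 1) div 2. D ^ (2 * j) / q powi (d * (int n - 2 * int j + 1))
           * R ^ (n - 2 * j + 1)
           * W a b p q ((r + d) * (int n - 2 * int j + 1) + r * (c - 1) + s)
           * (of_int (an + 2 * int j - 1 - c) gchoose (2 * j - 1)))
      = (\<Sum>j = 1..n div 2. K ^ (n - 2 * j + 1)
           * (of_int (an + 2 * int j - 1 - c) gchoose (2 * j - 1))
           * W_parity a b p q (n - 2 * j + 1)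
               ((r + d) * (int n - 2 * int j + 1) + r * (c - 1) + s))"
    unfolding sum_distrib_left K_def D_def
    by (intro sum.cong refl W_parity_scaling_even)
      (use \<open>D \<noteq> 0\<close> \<open>q \<noteq> 0\<close> \<open>odd n\<close> in \<open>auto simp: D_def\<close>)
  show ?thesis
    unfolding x_def[symmetric] R_def[symmetric] D_def[symmetric] mult.assoc[of "x powi (c - 1)"]
      split main_term even_terms odd_terms
    by (simp add: right_diff_distrib distrib_left)
qed

theorem theorem6:
  fixes a b p q :: complex and r s c d an :: int and n :: nat
  assumes "p \<noteq> 0" and "q \<noteq> 0" and "r \<noteq> 0" and "p\<^sup>2 - 4 * q \<noteq> 0"
    and "V p q d \<noteq> 0" and "V p q (r + d) \<noteq> 0" and "U p q r \<noteq> 0"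
    and "n > 0"
  shows
   "(even n \<longrightarrow>
      nested_sum c n (\<lambda>a0. (V p q d / V p q (r + d)) powi a0 * W a b p q (r * a0 + s)) an
      = 1 / (q powi (d * int n) * Delta p q ^ n) * (V p q d / U p q r) ^ n
          * (V p q d / V p q (r + d)) powi an * W a b p q (r * (int n + an) + d * int n + s)
        - (V p q d / V p q (r + d)) powi (c - 1) * (1 / Delta p q ^ n) *
          (\<Sum>j = 0..(n - 2) div 2. Delta p q ^ (2 * j) / q powi (d * (int n - 2 * int j))
             * (V p q d / U p q r) ^ (n - 2 * j)
             * W a b p q ((r + d) * (int n - 2 * int j) + r * (c - 1) + s)
             * (of_int (an + 2 * int j - c) gchoose (2 * j)))
        - (V p q d / V p q (r + d)) powi (c - 1) * (1 / Delta p q ^ (n + 2)) *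
          (\<Sum>j = 1..n div 2. Delta p q ^ (2 * j) / q powi (d * (int n - 2 * int j + 1))
             * (V p q d / U p q r) ^ (n - 2 * j + 1)
             * (W a b p q ((r + d) * (int n - 2 * int j + 1) + r * (c - 1) + s + 1)
                - q * W a b p q ((r + d) * (int n - 2 * int j + 1) + r * (c - 1) + s - 1))
             * (of_int (an + 2 * int j - 1 - c) gchoose (2 * j - 1))))
    \<and> (odd n \<longrightarrow>
      nested_sum c n (\<lambda>a0. (V p q d / V p q (r + d)) powi a0 * W a b p q (r * a0 + s)) an
      = 1 / (q powi (d * int n) * Delta p q ^ (n + 1)) * (V p q d / U p q r) ^ n
          * (V p q d / V p q (r + d)) powi an
          * (W a b p q (r * (int n + an) + d * int n + s + 1)
             - q * W a b p q (r * (int n + an) + d * int n + s - 1))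
        - (V p q d / V p q (r + d)) powi (c - 1) * (1 / Delta p q ^ (n + 1)) *
          (\<Sum>j = 0..(n - 1) div 2. Delta p q ^ (2 * j) / q powi (d * (int n - 2 * int j))
             * (V p q d / U p q r) ^ (n - 2 * j)
             * (W a b p q ((r + d) * (int n - 2 * int j) + r * (c - 1) + s + 1)
                - q * W a b p q ((r + d) * (int n - 2 * int j) + r * (c - 1) + s - 1))
             * (of_int (an + 2 * int j - c) gchoose (2 * j)))
        - (V p q d / V p q (r + d)) powi (c - 1) * (1 / Delta p q ^ (n + 1)) *
          (\<Sum>j = 1..(n - 1) div 2. Delta p q ^ (2 * j) / q powi (d * (int n - 2 * int j + 1))
             * (V p q d / U p q r) ^ (n - 2 * j + 1)
             * W a b p q ((r + d) * (int n - 2 * int j + 1) + r * (c - 1) + s)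
             * (of_int (an + 2 * int j - 1 - c) gchoose (2 * j - 1))))"
  using nested_sum_horadam_even[OF assms(2,4-8)] nested_sum_horadam_odd[OF assms(2,4-7)] by blast

end
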